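(* Let $G$ be a gap-free finite simple graph, $s\geq1$, and $e_1,\dots,e_s$ edges of $G$ (repetitions allowed). Then the graph $G'$ associated to $(I(G)^{s+1}:e_1\cdots e_s)^{\mathrm{pol}}$ is gap-free.
   Context: $S=K[x_1,\dots,x_n]$ with the $x_i$ the vertices of $G$; $I(G)=(xy: xy\text{ an edge})$; edges identified with monomials; $(J:m)=\{f: fm\in J\}$; the ideal $J=(I(G)^{s+1}:e_1\cdots e_s)$ is generated by quadratic monomials. Polarization: $J^{\mathrm{pol}}\subseteq K[x_1,\dots,x_n,x_1',\dots,x_n']$ is generated by all $x_ix_j$ ($i\ne j$) with $x_ix_j\in J$ and all $x_kx_k'$ with $x_k^2\in J$. The associated graph $G'$ has vertex set $V(G)\cup\{x_k' : x_k^2\in J\}$ and edge set $\{x_ix_j : i\neq j, x_ix_j\in J\}\cup\{x_kx_k' : x_k^2\in J\}$, so $I(G')=J^{\mathrm{pol}}$. Two vertex-disjoint edges $uv$, $xy$ form a gap in a graph if there is no edge with one endpoint in $\{u,v\}$ and the other in $\{x,y\}$; a graph is gap-free if it has no gap. *)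

theory Defs
  imports Main "HOL-Library.Multiset"
begin

definition simple_graph :: "'a set \<Rightarrow> 'a set set \<Rightarrow> bool" where
  "simple_graph V E \<longleftrightarrow> finite V \<and>
     (\<forall>e\<in>E. \<exists>u v. u \<noteq> v \<and> u \<in> V \<and> v \<in> V \<and> e = {u, v})"

text \<open>Monomials in the variables (vertices) are multisets of vertices;
  the monomial of an edge {u,v} is uv.\<close>
definition edge_mon :: "'a set \<Rightarrow> 'a multiset" where
  "edge_mon e = mset_set e"

text \<open>A monomial m lies in the monomial ideal I(G)^k iff it is divisible by
  a product of k edges (repetitions allowed).\<close>
definition in_edge_power :: "'a set set \<Rightarrow> nat \<Rightarrow> 'a multiset \<Rightarrow> bool" where
  "in_edge_power E k m \<longleftrightarrow>
     (\<exists>fs. length fs = k \<and> set fs \<subseteq> E \<and> sum_list (map edge_mon fs) \<subseteq># m)"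

text \<open>A monomial m lies in J = (I(G)^(s+1) : e_1 ... e_s), where es = [e_1,...,e_s].\<close>
definition in_colon :: "'a set set \<Rightarrow> 'a set list \<Rightarrow> 'a multiset \<Rightarrow> bool" where
  "in_colon E es m \<longleftrightarrow> in_edge_power E (length es + 1) (m + sum_list (map edge_mon es))"

text \<open>The graph G' associated to J^pol. Original vertices are Inl x, the new
  polarization vertices x' are Inr x.\<close>
definition pol_vertices :: "'a set \<Rightarrow> 'a set set \<Rightarrow> 'a set list \<Rightarrow> ('a + 'a) set" where
  "pol_vertices V E es = Inl ` V \<union> Inr ` {x \<in> V. in_colon E es {#x, x#}}"

definition pol_edges :: "'a set \<Rightarrow> 'a set set \<Rightarrow> 'a set list \<Rightarrow> ('a + 'a) set set" where
  "pol_edges V E es =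
     {{Inl x, Inl y} | x y. x \<in> V \<and> y \<in> V \<and> x \<noteq> y \<and> in_colon E es {#x, y#}}
   \<union> {{Inl x, Inr x} | x. x \<in> V \<and> in_colon E es {#x, x#}}"

definition gap_free :: "'b set set \<Rightarrow> bool" where
  "gap_free F \<longleftrightarrow>
     (\<forall>e\<in>F. \<forall>f\<in>F. e \<inter> f = {} \<longrightarrow> (\<exists>a\<in>e. \<exists>b\<in>f. {a, b} \<in> F))"

end

theory Submission
  imports Defs
begin

text \<open>Write \<open>p \<sim>\<^sub>S q\<close> when \<open>pq \<Prod>S \<in> I(G)\<^bsup>|S|+1\<^esup>\<close>, where \<open>S\<close> is the multiset of the
  \<open>e\<^sub>i\<close>. Such a relation is witnessed by an alternating walk from \<open>p\<close> to \<open>q\<close> that starts and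
  ends with edges of \<open>G\<close> and uses the members of \<open>S\<close> as its connecting edges; conversely
  two witnesses can be glued along an edge of \<open>S\<close>. Every edge of \<open>G'\<close> contains \<open>x, y\<close> with
  \<open>x \<sim>\<^sub>S y\<close> (\<open>x = y\<close> for the edges \<open>xx'\<close>), so it suffices to show, by induction on \<open>|S|\<close>, that
  for \<open>a \<sim>\<^sub>S b\<close> and \<open>c \<sim>\<^sub>S d\<close> with \<open>{a, b} \<inter> {c, d} = {}\<close> some endpoint of the first pair
  is related to one of the second. If \<open>ab\<close> and \<open>cd\<close> are both edges of \<open>G\<close>, this is
  gap-freeness. Otherwise the walk from \<open>a\<close> starts with \<open>au\<close> followed by \<open>uv \<in> S\<close>; either
  \<open>c \<sim> d\<close> survives deleting \<open>uv\<close> from \<open>S\<close>, and the induction hypothesis for the pairs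
  \<open>v, b\<close> and \<open>c, d\<close> is extended through \<open>uv\<close>, or the walk from \<open>c\<close> to \<open>d\<close> passes through
  \<open>uv\<close> and one of its halves can be rerouted to \<open>a\<close>.\<close>

definition edge_sum :: "'a set multiset \<Rightarrow> 'a multiset" where
  "edge_sum S = (\<Sum>e\<in>#S. edge_mon e)"

text \<open>\<open>colon_pair E S p q\<close> is \<open>p \<sim>\<^sub>S q\<close>; degree counting forces \<open>F\<close> to consist of
  exactly \<open>|S| + 1\<close> edges (see \<open>in_colon_iff_colon_pair\<close>).\<close>
definition colon_pair :: "'a set set \<Rightarrow> 'a set multiset \<Rightarrow> 'a \<Rightarrow> 'a \<Rightarrow> bool" where
  "colon_pair E S p q \<longleftrightarrow> (\<exists>F. set_mset F \<subseteq> E \<and> edge_sum F = {#p, q#} + edge_sum S)"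

lemma edge_mon_doubleton: "u \<noteq> v \<Longrightarrow> edge_mon {u, v} = {#u, v#}"
  by (simp add: edge_mon_def)

lemma edge_sum_empty [simp]: "edge_sum {#} = {#}"
  and edge_sum_add_mset [simp]: "edge_sum (add_mset e S) = edge_mon e + edge_sum S"
  and edge_sum_union [simp]: "edge_sum (S + T) = edge_sum S + edge_sum T"
  by (simp_all add: edge_sum_def)

lemma edge_sum_mset: "edge_sum (mset es) = sum_list (map edge_mon es)"
  by (induction es) auto

lemma edge_sum_remove: "g \<in># S \<Longrightarrow> edge_sum S = edge_mon g + edge_sum (S - {#g#})"
  by (metis insert_DiffM edge_sum_add_mset)

lemma size_edge_sum:
  assumes "\<forall>e\<in>E. card e = 2" "set_mset F \<subseteq> E"
  shows "size (edge_sum F) = 2 * size F"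
  using assms(2) by (induction F) (use assms(1) in \<open>auto simp: edge_mon_def\<close>)

lemma in_edge_sumE:
  assumes "x \<in># edge_sum S"
  obtains g where "g \<in># S" "x \<in># edge_mon g"
  using assms unfolding edge_sum_def by (induction S) auto

lemma card_2_edge_monE:
  assumes "card e = 2" "x \<in># edge_mon e"
  obtains y where "x \<noteq> y" "e = {x, y}"
proof -
  obtain a b where "e = {a, b}" "a \<noteq> b" using assms(1) by (auto simp: card_2_iff)
  moreover have "x = a \<or> x = b" using assms(2) calculation by (simp add: edge_mon_doubleton)
  ultimately show ?thesis using that by (metis insert_commute)
qed

lemma colon_pair_sym: "colon_pair E S p q = colon_pair E S q p"
  unfolding colon_pair_def by (simp add: add_mset_commute)

lemma colon_pair_edge: "{p, q} \<in> E \<Longrightarrow> p \<noteq> q \<Longrightarrow> colon_pair E {#} p q"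
  unfolding colon_pair_def by (rule exI[of _ "{#{p, q}#}"]) (simp add: edge_mon_doubleton)

lemma colon_pair_mono:
  assumes "colon_pair E R p q" "R \<subseteq># S" "set_mset S \<subseteq> E"
  shows "colon_pair E S p q"
proof -
  obtain F where F: "set_mset F \<subseteq> E" "edge_sum F = {#p, q#} + edge_sum R"
    using assms(1) unfolding colon_pair_def by blast
  have "edge_sum S = edge_sum R + edge_sum (S - R)"
    using assms(2) by (metis edge_sum_union subset_mset.add_diff_inverse)
  moreover have "set_mset (S - R) \<subseteq> E"
    using assms(3) by (meson in_diffD subset_iff)
  ultimately show ?thesis
    unfolding colon_pair_def using F by (intro exI[of _ "F + (S - R)"]) (auto simp: add.assoc)
qed

lemma colon_pair_join:
  assumes "colon_pair E R1 p u" "colon_pair E R2 v q" "{u, v} \<in> E" "u \<noteq> v"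
  shows "colon_pair E (R1 + R2 + {#{u, v}#}) p q"
proof -
  obtain F1 where "set_mset F1 \<subseteq> E" "edge_sum F1 = {#p, u#} + edge_sum R1"
    using assms(1) unfolding colon_pair_def by blast
  moreover obtain F2 where "set_mset F2 \<subseteq> E" "edge_sum F2 = {#v, q#} + edge_sum R2"
    using assms(2) unfolding colon_pair_def by blast
  ultimately show ?thesis
    unfolding colon_pair_def using assms(4)
    by (intro exI[of _ "F1 + F2"]) (auto simp: edge_mon_doubleton add_mset_commute)
qed

text \<open>Peeling off the edge of \<open>F\<close> at \<open>p\<close>, and then the edge of \<open>S\<close> cancelling its
  other end, exhibits the first steps of an alternating walk from \<open>p\<close> to \<open>q\<close>.\<close>
lemma colon_pair_cases:
  assumes E: "\<forall>e\<in>E. card e = 2" and pq: "colon_pair E S p q" and S: "set_mset S \<subseteq> E"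
  shows "{p, q} \<in> E \<or>
    (\<exists>u v. {p, u} \<in> E \<and> p \<noteq> u \<and> u \<noteq> v \<and> {u, v} \<in># S \<and> colon_pair E (S - {#{u, v}#}) v q)"
proof -
  obtain F where F: "set_mset F \<subseteq> E" "edge_sum F = {#p, q#} + edge_sum S"
    using pq unfolding colon_pair_def by blast
  have "p \<in># edge_sum F" using F(2) by simp
  then obtain f where f: "f \<in># F" "p \<in># edge_mon f" by (rule in_edge_sumE)
  have "card f = 2" using E F(1) f(1) by auto
  then obtain u where u: "p \<noteq> u" "f = {p, u}"
    using f(2) by (rule card_2_edge_monE)
  have fE: "{p, u} \<in> E" using f F(1) u by auto
  have rest: "add_mset q (edge_sum S) = add_mset u (edge_sum (F - {#f#}))"
    using F(2) edge_sum_remove[OF f(1)] u by (simp add: edge_mon_doubleton)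
  show ?thesis
  proof (cases "u = q")
    case True
    then show ?thesis using fE by simp
  next
    case False
    then have "u \<in># edge_sum S" using rest by (metis insert_noteq_member)
    then obtain g where g: "g \<in># S" "u \<in># edge_mon g" by (rule in_edge_sumE)
    have "card g = 2" using E S g(1) by auto
    then obtain v where v: "u \<noteq> v" "g = {u, v}"
      using g(2) by (rule card_2_edge_monE)
    have "edge_sum (F - {#f#}) = {#v, q#} + edge_sum (S - {#g#})"
      using rest edge_sum_remove[OF g(1)] v by (simp add: edge_mon_doubleton add_mset_commute)
    moreover have "set_mset (F - {#f#}) \<subseteq> E" using F(1) by (meson in_diffD subset_iff)
    ultimately have "colon_pair E (S - {#g#}) v q" unfolding colon_pair_def by blast
    then show ?thesis using fE u(1) v g(1) by blast
  qed
qed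

text \<open>An alternating walk from \<open>c\<close> to \<open>d\<close> that cannot avoid the edge \<open>uv\<close> of \<open>S\<close>
  passes through it; cutting the walk there splits the rest of \<open>S\<close> between its two halves.\<close>
lemma colon_pair_split:
  assumes E: "\<forall>e\<in>E. card e = 2" and "set_mset S \<subseteq> E" "colon_pair E S c d" "{u, v} \<in># S"
    and "\<not> colon_pair E (S - {#{u, v}#}) c d"
  shows "\<exists>R1 R2 x y. {x, y} = {u, v} \<and> R1 + R2 \<subseteq># S - {#{u, v}#} \<and>
    colon_pair E R1 c x \<and> colon_pair E R2 y d"
  using assms(2-)
proof (induction "size S" arbitrary: S c rule: less_induct)
  case less
  let ?e = "{u, v}"
  have SeE: "set_mset (S - {#?e#}) \<subseteq> E" using less.prems(1) by (meson in_diffD subset_iff)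
  from colon_pair_cases[OF E less.prems(2,1)] show ?case
  proof (elim disjE exE conjE)
    assume "{c, d} \<in> E"
    moreover from this have "c \<noteq> d" using E by force
    ultimately have "colon_pair E {#} c d" by (rule colon_pair_edge)
    then have "colon_pair E (S - {#?e#}) c d" by (rule colon_pair_mono[OF _ _ SeE]) simp
    with less.prems(4) show ?thesis by contradiction
  next
    fix w z
    assume cw_E: "{c, w} \<in> E" and "c \<noteq> w" "w \<noteq> z" and g: "{w, z} \<in># S"
      and zd: "colon_pair E (S - {#{w, z}#}) z d"
    let ?g = "{w, z}"
    have cw: "colon_pair E {#} c w" using cw_E \<open>c \<noteq> w\<close> by (rule colon_pair_edge)
    have gE: "?g \<in> E" using g less.prems(1) by auto
    show ?thesis
    proof (cases "?g = ?e")
      case True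
      then show ?thesis using cw zd
        by (intro exI[of _ "{#}"] exI[of _ "S - {#?e#}"] exI[of _ w] exI[of _ z]) simp
    next
      case False
      have eS': "?e \<in># S - {#?g#}" using False less.prems(3) by (simp add: in_diff_count)
      have gSe: "?g \<in># S - {#?e#}" using False g by (simp add: in_diff_count)
      have restore: "add_mset ?g (S - {#?g#} - {#?e#}) = S - {#?e#}"
        using insert_DiffM[OF gSe] by (simp only: diff_right_commute)
      have smaller: "size (S - {#?g#}) < size S" using g by (rule size_Diff1_less)
      have S'E: "set_mset (S - {#?g#}) \<subseteq> E" using less.prems(1) by (meson in_diffD subset_iff)
      have avoid: "\<not> colon_pair E (S - {#?g#} - {#?e#}) z d"
      proof
        assume "colon_pair E (S - {#?g#} - {#?e#}) z d"
        from colon_pair_join[OF cw this gE \<open>w \<noteq> z\<close>] restore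
        have "colon_pair E (S - {#?e#}) c d" by simp
        with less.prems(4) show False by contradiction
      qed
      obtain R1 R2 x y where R: "{x, y} = ?e" "R1 + R2 \<subseteq># S - {#?g#} - {#?e#}"
        "colon_pair E R1 z x" "colon_pair E R2 y d"
        using less.hyps[OF smaller S'E zd eS' avoid] by blast
      have "colon_pair E ({#} + R1 + {#?g#}) c x"
        using colon_pair_join[OF cw R(3) gE \<open>w \<noteq> z\<close>] .
      moreover have "add_mset ?g (R1 + R2) \<subseteq># add_mset ?g (S - {#?g#} - {#?e#})"
        using R(2) by (simp only: mset_subset_eq_add_mset_cancel)
      then have "({#} + R1 + {#?g#}) + R2 \<subseteq># S - {#?e#}"
        unfolding restore by (simp add: add.commute add.left_commute)
      ultimately show ?thesis using R(1,4)
        by (intro exI[of _ "{#} + R1 + {#?g#}"] exI[of _ R2] exI[of _ x] exI[of _ y]) simp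
    qed
  qed
qed

lemma colon_pair_gap_free_step:
  assumes E: "\<forall>e\<in>E. card e = 2" and SE: "set_mset S \<subseteq> E" and cd: "colon_pair E S c d"
    and au: "{a, u} \<in> E" "a \<noteq> u" and uv: "u \<noteq> v" "{u, v} \<in># S"
    and IH: "colon_pair E (S - {#{u, v}#}) c d \<Longrightarrow> v \<notin> {c, d} \<Longrightarrow>
      \<exists>x\<in>{v, b}. \<exists>y\<in>{c, d}. colon_pair E (S - {#{u, v}#}) x y"
  shows "\<exists>x\<in>{a, b}. \<exists>y\<in>{c, d}. colon_pair E S x y"
proof -
  let ?e = "{u, v}"
  have eE: "?e \<in> E" using uv(2) SE by auto
  have a_u: "colon_pair E {#} a u" using au by (rule colon_pair_edge)
  have through_e: "colon_pair E S a q" if "colon_pair E (S - {#?e#}) v q" for q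
    using colon_pair_join[OF a_u that eE uv(1)] uv(2) by simp
  show ?thesis
  proof (cases "colon_pair E (S - {#?e#}) c d")
    case True
    consider "v = c" | "v = d" | "v \<notin> {c, d}" by blast
    then show ?thesis
    proof cases
      case 1
      then have "colon_pair E S a d" using through_e True by simp
      then show ?thesis by blast
    next
      case 2
      then have "colon_pair E S a c" using through_e True colon_pair_sym[of E _ c d] by simp
      then show ?thesis by blast
    next
      case 3
      then obtain x y where xy: "x \<in> {v, b}" "y \<in> {c, d}" "colon_pair E (S - {#?e#}) x y"
        using IH[OF True] by blast
      show ?thesis
      proof (cases "x = b")
        case True
        have "colon_pair E S x y" using colon_pair_mono[OF xy(3) _ SE] by simp
        then show ?thesis using xy(2) True by blast
      next
        case False
        then have "colon_pair E S a y" using xy through_e by simp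
        then show ?thesis using xy(2) by blast
      qed
    qed
  next
    case False
    then obtain R1 R2 x y where R: "{x, y} = ?e" "R1 + R2 \<subseteq># S - {#?e#}"
      "colon_pair E R1 c x" "colon_pair E R2 y d"
      using colon_pair_split[OF E SE cd uv(2)] by blast
    have "R1 \<subseteq># S - {#?e#}" "R2 \<subseteq># S - {#?e#}"
      using subset_mset.order_trans[OF _ R(2)] by simp_all
    then have R1: "add_mset ?e R1 \<subseteq># S" and R2: "add_mset ?e R2 \<subseteq># S"
      unfolding insert_subset_eq_iff using uv(2) by simp_all
    from R(1) consider "x = u" "y = v" | "x = v" "y = u" by (metis doubleton_eq_iff)
    then show ?thesis
    proof cases
      case 1
      have "colon_pair E ({#} + R2 + {#?e#}) a d"
        using colon_pair_join[OF a_u _ eE uv(1)] R(4) 1 by simp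
      then have "colon_pair E S a d" using colon_pair_mono[OF _ R2 SE] by simp
      then show ?thesis by blast
    next
      case 2
      have u_a: "colon_pair E {#} u a" using a_u colon_pair_sym by metis
      have vu: "{v, u} \<in> E" using eE by (simp add: insert_commute)
      have "colon_pair E (R1 + {#} + {#{v, u}#}) c a"
        using colon_pair_join[OF R(3)[unfolded 2] u_a vu not_sym[OF uv(1)]] .
      then have "colon_pair E S c a"
        using colon_pair_mono[OF _ R1 SE] by (simp add: insert_commute)
      then show ?thesis using colon_pair_sym[of E S c a] by blast
    qed
  qed
qed

lemma colon_pair_gap_free:
  assumes E: "\<forall>e\<in>E. card e = 2" and gap: "gap_free E"
    and "set_mset S \<subseteq> E" "colon_pair E S a b" "colon_pair E S c d" "a \<notin> {c, d}" "b \<notin> {c, d}"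
  shows "\<exists>x\<in>{a, b}. \<exists>y\<in>{c, d}. colon_pair E S x y"
  using assms(3-)
proof (induction "size S" arbitrary: S a b c d rule: less_induct)
  case less
  have walk: "\<exists>x\<in>{a', b'}. \<exists>y\<in>{c', d'}. colon_pair E S x y"
    if hyp: "colon_pair E S c' d'" "b' \<notin> {c', d'}" "{a', u} \<in> E" "a' \<noteq> u"
      "u \<noteq> v" "{u, v} \<in># S" "colon_pair E (S - {#{u, v}#}) v b'" for a' b' c' d' u v
  proof (rule colon_pair_gap_free_step[OF E less.prems(1) hyp(1,3-6)])
    have smaller: "size (S - {#{u, v}#}) < size S" using hyp(6) by (rule size_Diff1_less)
    have S'E: "set_mset (S - {#{u, v}#}) \<subseteq> E" using less.prems(1) by (meson in_diffD subset_iff)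
    show "\<exists>x\<in>{v, b'}. \<exists>y\<in>{c', d'}. colon_pair E (S - {#{u, v}#}) x y"
      if "colon_pair E (S - {#{u, v}#}) c' d'" "v \<notin> {c', d'}"
      by (rule less.hyps[OF smaller S'E hyp(7) that hyp(2)])
  qed
  from colon_pair_cases[OF E less.prems(2,1)] show ?case
  proof (elim disjE exE conjE)
    assume ab: "{a, b} \<in> E"
    from colon_pair_cases[OF E less.prems(3,1)] show ?thesis
    proof (elim disjE exE conjE)
      assume cd: "{c, d} \<in> E"
      have "{a, b} \<inter> {c, d} = {}" using less.prems(4,5) by auto
      then obtain x y where xy: "x \<in> {a, b}" "y \<in> {c, d}" "{x, y} \<in> E"
        using gap[unfolded gap_free_def, rule_format, OF ab cd] by blast
      then have "x \<noteq> y" using less.prems(4,5) by auto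
      with xy(3) have "colon_pair E {#} x y" by (rule colon_pair_edge)
      then have "colon_pair E S x y" by (rule colon_pair_mono[OF _ _ less.prems(1)]) simp
      then show ?thesis using xy by blast
    next
      fix u v
      assume "{c, u} \<in> E" "c \<noteq> u" "u \<noteq> v" "{u, v} \<in># S" "colon_pair E (S - {#{u, v}#}) v d"
      moreover have "d \<notin> {a, b}" using less.prems(4,5) by auto
      ultimately obtain x y where xy: "x \<in> {c, d}" "y \<in> {a, b}" "colon_pair E S x y"
        by (metis walk[OF less.prems(2)])
      then have "colon_pair E S y x" using colon_pair_sym[of E S x y] by simp
      then show ?thesis using xy(1,2) by blast
    qed
  next
    fix u v
    assume "{a, u} \<in> E" "a \<noteq> u" "u \<noteq> v" "{u, v} \<in># S" "colon_pair E (S - {#{u, v}#}) v b"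
    then show ?thesis by (rule walk[OF less.prems(3,5)])
  qed
qed

lemma in_colon_iff_colon_pair:
  assumes E: "\<forall>e\<in>E. card e = 2" and es: "set es \<subseteq> E"
  shows "in_colon E es {#p, q#} \<longleftrightarrow> colon_pair E (mset es) p q"
proof
  assume "in_colon E es {#p, q#}"
  then obtain fs where fs: "length fs = length es + 1" "set fs \<subseteq> E"
    "edge_sum (mset fs) \<subseteq># {#p, q#} + edge_sum (mset es)"
    unfolding in_colon_def in_edge_power_def edge_sum_mset by auto
  have "size (edge_sum (mset fs)) = size ({#p, q#} + edge_sum (mset es))"
    using size_edge_sum[OF E, of "mset fs"] size_edge_sum[OF E, of "mset es"] fs(1,2) es by simp
  with fs(3) have "edge_sum (mset fs) = {#p, q#} + edge_sum (mset es)"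
    by (metis mset_subset_size subset_mset.le_less less_irrefl)
  then show "colon_pair E (mset es) p q"
    unfolding colon_pair_def using fs(2) by (intro exI[of _ "mset fs"]) simp
next
  assume "colon_pair E (mset es) p q"
  then obtain F where F: "set_mset F \<subseteq> E" "edge_sum F = {#p, q#} + edge_sum (mset es)"
    unfolding colon_pair_def by blast
  obtain fs where fs: "mset fs = F" using ex_mset by blast
  have "length fs = length es + 1"
    using size_edge_sum[OF E F(1)] size_edge_sum[OF E, of "mset es"] F(2) fs es
    by (simp flip: size_mset)
  then show "in_colon E es {#p, q#}"
    unfolding in_colon_def in_edge_power_def using F fs
    by (intro exI[of _ fs]) (auto simp flip: edge_sum_mset)
qed

lemma pol_edgesE:
  assumes E: "\<forall>e\<in>E. card e = 2" and es: "set es \<subseteq> E" and P: "P \<in> pol_edges V E es"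
  obtains a b where "a \<in> V" "b \<in> V" "Inl a \<in> P" "Inl b \<in> P" "colon_pair E (mset es) a b"
  using P that unfolding pol_edges_def in_colon_iff_colon_pair[OF E es] by blast

theorem lemma6p14:
  fixes V :: "'a set" and E :: "'a set set" and es :: "'a set list"
  assumes "simple_graph V E"
    and "gap_free E"
    and "length es \<ge> 1"
    and "set es \<subseteq> E"
  shows "gap_free (pol_edges V E es)"
  unfolding gap_free_def
proof (intro ballI impI)
  have E: "\<forall>e\<in>E. card e = 2" using assms(1) unfolding simple_graph_def card_2_iff by blast
  fix P Q assume P: "P \<in> pol_edges V E es" and Q: "Q \<in> pol_edges V E es" and "P \<inter> Q = {}"
  obtain a b where ab: "a \<in> V" "b \<in> V" "Inl a \<in> P" "Inl b \<in> P" "colon_pair E (mset es) a b"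
    using pol_edgesE[OF E assms(4) P] .
  obtain c d where cd: "c \<in> V" "d \<in> V" "Inl c \<in> Q" "Inl d \<in> Q" "colon_pair E (mset es) c d"
    using pol_edgesE[OF E assms(4) Q] .
  have "a \<notin> {c, d}" "b \<notin> {c, d}" using ab cd \<open>P \<inter> Q = {}\<close> by auto
  then obtain x y where xy: "x \<in> {a, b}" "y \<in> {c, d}" "colon_pair E (mset es) x y"
    using colon_pair_gap_free[OF E assms(2) _ ab(5) cd(5)] assms(4) by auto
  have "x \<noteq> y" using xy \<open>a \<notin> {c, d}\<close> \<open>b \<notin> {c, d}\<close> by auto
  then have "{Inl x, Inl y} \<in> pol_edges V E es"
    using xy ab cd in_colon_iff_colon_pair[OF E assms(4)] unfolding pol_edges_def by blast
  then show "\<exists>p\<in>P. \<exists>q\<in>Q. {p, q} \<in> pol_edges V E es" using xy ab cd by blast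
qed

end
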